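(* Let $n\ge1$ and let $Q_1$ be a Kazhdan subset of $\mathbb R^{2n}=\mathbb R^n\times\mathbb R^n$, whose elements are written $(\mathbf q,\mathbf p)$. Then $\sup\{|\mathbf p|:(\mathbf q,\mathbf p)\in Q_1\}=+\infty$, where $|\mathbf p|$ is the Euclidean norm of $\mathbf p$.
   Context: A subset $Q$ is a Kazhdan set in $\mathbb R^{2n}$ (additive group, usual topology) if there exists $\varepsilon>0$ such that every strongly continuous unitary representation $\pi$ of $\mathbb R^{2n}$ on a complex Hilbert space having a vector $x$ with $\sup_{g\in Q}\|\pi(g)x-x\|<\varepsilon\|x\|$ has a non-zero invariant vector. *)

theory Defs
  imports "HOL-Analysis.Analysis"
begin

text \<open>A complex Hilbert space is encoded as a real Hilbert space (type class
  real_inner + complete_space) together with a complex structure J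
  (multiplication by i): a real-linear isometry with J (J x) = - x.\<close>

definition complex_structure :: "('h::{real_inner,complete_space} \<Rightarrow> 'h) \<Rightarrow> bool" where
  "complex_structure J \<longleftrightarrow> linear J \<and> (\<forall>x. J (J x) = - x) \<and> (\<forall>x. norm (J x) = norm x)"

definition unitary_op :: "('h::{real_inner,complete_space} \<Rightarrow> 'h) \<Rightarrow> ('h \<Rightarrow> 'h) \<Rightarrow> bool" where
  "unitary_op J U \<longleftrightarrow> linear U \<and> (\<forall>x. U (J x) = J (U x)) \<and> (\<forall>x. norm (U x) = norm x) \<and> surj U"

definition unitary_rep ::
  "('h::{real_inner,complete_space} \<Rightarrow> 'h) \<Rightarrow> ((real^'n) \<times> (real^'n) \<Rightarrow> 'h \<Rightarrow> 'h) \<Rightarrow> bool" where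
  "unitary_rep J \<pi> \<longleftrightarrow>
     (\<forall>g. unitary_op J (\<pi> g)) \<and> \<pi> 0 = id \<and> (\<forall>g h. \<pi> (g + h) = \<pi> g \<circ> \<pi> h) \<and>
     (\<forall>x. continuous_on UNIV (\<lambda>g. \<pi> g x))"

text \<open>The condition sup over Q of the norms of (pi g x - x)
  being strictly less than eps times the norm of x is written as existence of
  a bound delta < eps * norm x (with x nonzero).\<close>

definition kazhdan_set_on ::
  "('h::{real_inner,complete_space} \<Rightarrow> 'h) \<Rightarrow> ((real^'n) \<times> (real^'n)) set \<Rightarrow> bool" where
  "kazhdan_set_on J Q \<longleftrightarrow>
     (\<exists>\<epsilon>>0. \<forall>\<pi> :: (real^'n) \<times> (real^'n) \<Rightarrow> 'h \<Rightarrow> 'h. unitary_rep J \<pi> \<longrightarrow>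
        (\<exists>x. x \<noteq> 0 \<and> (\<exists>\<delta>. \<delta> < \<epsilon> * norm x \<and> (\<forall>g\<in>Q. norm (\<pi> g x - x) \<le> \<delta>))) \<longrightarrow>
        (\<exists>v. v \<noteq> 0 \<and> (\<forall>g. \<pi> g v = v)))"

end

theory Submission
  imports Defs
begin

text \<open>Suppose the momenta of Q1 were bounded, so that some nonzero linear functional f of the
  momentum is bounded by M on Q1. Let the group act on the Hilbert space by the character
  g \<mapsto> e^{i t f(g)}, i.e. by scalar multiplication through the complex structure. This is a
  unitary representation moving every vector x by at most 2 t M \<parallel>x\<parallel> on Q1, which is less than
  \<epsilon> \<parallel>x\<parallel> for small t > 0. But it has no nonzero invariant vector, since f takes the value
  \<pi>/t and e^{i\<pi>} = -1.\<close>

lemma inner_complex_structure: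
  assumes "complex_structure J"
  shows "inner (J x) (J y) = inner x y"
proof -
  have lin: "linear J" and "\<And>z. norm (J z) = norm z"
    using assms unfolding complex_structure_def by auto
  then have sq: "\<And>z. inner (J z) (J z) = inner z z"
    by (metis dot_square_norm)
  have "inner (J x + J y) (J x + J y) = inner (x + y) (x + y)"
    using sq[of "x + y"] lin by (simp add: linear_add)
  then show ?thesis
    using sq[of x] sq[of y] by (simp add: inner_add inner_commute)
qed

lemma inner_complex_structure_self:
  assumes "complex_structure J"
  shows "inner x (J x) = 0"
proof -
  have "J (J x) = - x"
    using assms unfolding complex_structure_def by auto
  then have "inner x (J x) = - inner x (J x)"
    using inner_complex_structure[OF assms, of x "J x"] by (simp add: inner_commute)
  then show ?thesis
    by simp
qed

definition cis_scale :: "('h::real_vector \<Rightarrow> 'h) \<Rightarrow> real \<Rightarrow> 'h \<Rightarrow> 'h" where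
  "cis_scale J a x = cos a *\<^sub>R x + sin a *\<^sub>R J x"

lemma cis_scale_0: "cis_scale J 0 = id"
  by (simp add: cis_scale_def fun_eq_iff)

lemma cis_scale_pi: "cis_scale J pi x = - x"
  by (simp add: cis_scale_def)

lemma cis_scale_add:
  assumes "complex_structure J"
  shows "cis_scale J a (cis_scale J b x) = cis_scale J (a + b) x"
proof -
  have "linear J" and "\<And>x. J (J x) = - x"
    using assms unfolding complex_structure_def by auto
  then show ?thesis
    unfolding cis_scale_def by (simp add: linear_add linear_scale cos_add sin_add algebra_simps)
qed

lemma norm_cis_scale:
  assumes "complex_structure J"
  shows "norm (cis_scale J a x) = norm x"
proof -
  have "(norm (cis_scale J a x))\<^sup>2 =
      (cos a)\<^sup>2 * inner x x + (sin a)\<^sup>2 * inner (J x) (J x) + 2 * cos a * sin a * inner x (J x)"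
    unfolding cis_scale_def dot_square_norm[symmetric]
    by (simp add: inner_commute algebra_simps power2_eq_square)
  also have "\<dots> = ((cos a)\<^sup>2 + (sin a)\<^sup>2) * inner x x"
    using inner_complex_structure[OF assms] inner_complex_structure_self[OF assms]
    by (simp add: distrib_right[symmetric])
  finally show ?thesis
    by (simp add: dot_square_norm)
qed

lemma unitary_op_cis_scale:
  assumes "complex_structure J"
  shows "unitary_op J (cis_scale J a)"
  unfolding unitary_op_def
proof (intro conjI allI)
  have lin: "linear J" and JJ: "\<And>x. J (J x) = - x"
    using assms unfolding complex_structure_def by auto
  show "linear (cis_scale J a)"
    unfolding cis_scale_def
    by (rule linearI) (simp_all add: linear_add[OF lin] linear_scale[OF lin] algebra_simps)
  show "cis_scale J a (J x) = J (cis_scale J a x)" for x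
    unfolding cis_scale_def using lin JJ by (simp add: linear_add linear_scale)
  show "norm (cis_scale J a x) = norm x" for x
    by (rule norm_cis_scale[OF assms])
  have "cis_scale J a (cis_scale J (- a) y) = y" for y
    using cis_scale_add[OF assms, of a "- a" y] by (simp add: cis_scale_0)
  then show "surj (cis_scale J a)"
    by (metis surjI)
qed

lemma abs_cos_minus_one_le: "\<bar>cos a - 1\<bar> \<le> \<bar>a::real\<bar>"
proof -
  have "\<bar>sin (a / 2)\<bar>\<^sup>2 \<le> \<bar>sin (a / 2)\<bar>"
    using abs_sin_le_one[of "a / 2"] by (metis abs_ge_zero mult_left_le power2_eq_square)
  also have "\<dots> \<le> \<bar>a / 2\<bar>"
    by (rule abs_sin_x_le_abs_x)
  finally show ?thesis
    using cos_double_sin[of "a / 2"] by simp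
qed

lemma norm_cis_scale_minus_le:
  assumes "complex_structure J"
  shows "norm (cis_scale J a x - x) \<le> 2 * \<bar>a\<bar> * norm x"
proof -
  have "norm (J x) = norm x"
    using assms unfolding complex_structure_def by auto
  moreover have "cis_scale J a x - x = (cos a - 1) *\<^sub>R x + sin a *\<^sub>R J x"
    unfolding cis_scale_def by (simp add: algebra_simps)
  ultimately have "norm (cis_scale J a x - x) \<le> \<bar>cos a - 1\<bar> * norm x + \<bar>sin a\<bar> * norm x"
    using norm_triangle_ineq[of "(cos a - 1) *\<^sub>R x" "sin a *\<^sub>R J x"] by simp
  also have "\<dots> \<le> \<bar>a\<bar> * norm x + \<bar>a\<bar> * norm x"
    by (intro add_mono mult_right_mono abs_sin_x_le_abs_x abs_cos_minus_one_le) auto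
  finally show ?thesis
    by simp
qed

lemma unitary_rep_cis_scale_linear:
  fixes f :: "(real^'n) \<times> (real^'n) \<Rightarrow> real"
  assumes "complex_structure J" and "linear f"
  shows "unitary_rep J (\<lambda>g. cis_scale J (f g))"
  unfolding unitary_rep_def
proof (intro conjI allI)
  show "unitary_op J (cis_scale J (f g))" for g
    by (rule unitary_op_cis_scale[OF assms(1)])
  show "cis_scale J (f 0) = id"
    using assms(2) by (simp add: linear_0 cis_scale_0)
  show "cis_scale J (f (g + h)) = cis_scale J (f g) \<circ> cis_scale J (f h)" for g h
    using assms(2) by (simp add: fun_eq_iff linear_add cis_scale_add[OF assms(1)])
  have "continuous_on UNIV f"
    using assms(2) by (simp add: linear_continuous_on linear_conv_bounded_linear)
  then show "continuous_on UNIV (\<lambda>g. cis_scale J (f g) x)" for x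
    unfolding cis_scale_def by (intro continuous_intros)
qed

lemma kazhdan_set_onE:
  fixes Q :: "((real^'n) \<times> (real^'n)) set"
    and J :: "'h::{real_inner,complete_space} \<Rightarrow> 'h"
  assumes "kazhdan_set_on J Q"
  obtains \<epsilon> where "\<epsilon> > 0"
    and "\<And>\<pi> x c. unitary_rep J \<pi> \<Longrightarrow> x \<noteq> 0 \<Longrightarrow> c < \<epsilon> \<Longrightarrow>
      (\<And>g. g \<in> Q \<Longrightarrow> norm (\<pi> g x - x) \<le> c * norm x) \<Longrightarrow> \<exists>v. v \<noteq> 0 \<and> (\<forall>g. \<pi> g v = v)"
proof -
  obtain \<epsilon> where "\<epsilon> > 0" and kazhdan: "\<forall>\<pi> :: (real^'n) \<times> (real^'n) \<Rightarrow> 'h \<Rightarrow> 'h.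
      unitary_rep J \<pi> \<longrightarrow>
      (\<exists>x. x \<noteq> 0 \<and> (\<exists>\<delta>. \<delta> < \<epsilon> * norm x \<and> (\<forall>g\<in>Q. norm (\<pi> g x - x) \<le> \<delta>))) \<longrightarrow>
      (\<exists>v. v \<noteq> 0 \<and> (\<forall>g. \<pi> g v = v))"
    using assms unfolding kazhdan_set_on_def by (elim exE conjE)
  have "\<exists>v. v \<noteq> 0 \<and> (\<forall>g. \<pi> g v = v)"
    if "unitary_rep J \<pi>" "x \<noteq> 0" "c < \<epsilon>" "\<And>g. g \<in> Q \<Longrightarrow> norm (\<pi> g x - x) \<le> c * norm x"
    for \<pi> x c
  proof (rule kazhdan[rule_format, OF that(1)], intro exI conjI ballI)
    show "x \<noteq> 0" "c * norm x < \<epsilon> * norm x"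
      using that(2,3) by simp_all
    show "norm (\<pi> g x - x) \<le> c * norm x" if "g \<in> Q" for g
      by (rule \<open>\<And>g. g \<in> Q \<Longrightarrow> norm (\<pi> g x - x) \<le> c * norm x\<close>[OF that])
  qed
  with \<open>\<epsilon> > 0\<close> show ?thesis
    using that by blast
qed

lemma cis_scale_invariant_eq_0:
  fixes f :: "'a::real_vector \<Rightarrow> real"
  assumes "linear f" "f g0 \<noteq> 0" "t \<noteq> 0"
    and invariant: "\<And>g. cis_scale J (t * f g) v = v"
  shows "v = 0"
proof -
  have "t * f ((pi / (t * f g0)) *\<^sub>R g0) = pi"
    using assms(1-3) by (simp add: linear_scale)
  then have "v = - v"
    using invariant[of "(pi / (t * f g0)) *\<^sub>R g0"] by (simp add: cis_scale_pi)
  then have "2 *\<^sub>R v = 0"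
    by (metis add.right_inverse scaleR_2)
  then show ?thesis
    by simp
qed

lemma kazhdan_set_linear_unbounded:
  fixes Q :: "((real^'n) \<times> (real^'n)) set"
    and J :: "'h::{real_inner,complete_space} \<Rightarrow> 'h"
    and f :: "(real^'n) \<times> (real^'n) \<Rightarrow> real"
  assumes J: "complex_structure J"
    and nontrivial: "\<exists>x::'h. x \<noteq> 0"
    and kazhdan: "kazhdan_set_on J Q"
    and f: "linear f" "f g0 \<noteq> 0"
  shows "\<exists>z\<in>Q. \<bar>f z\<bar> > M"
proof (rule ccontr)
  assume bounded: "\<not> ?thesis"
  define m where "m = max M 0"
  have "m \<ge> 0"
    by (simp add: m_def)
  have bound: "\<And>z. z \<in> Q \<Longrightarrow> \<bar>f z\<bar> \<le> m"
    using bounded by (auto simp: m_def not_less)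
  obtain \<epsilon> where "\<epsilon> > 0" and almost_invariant_imp_invariant:
    "\<And>\<pi> x c. unitary_rep J \<pi> \<Longrightarrow> x \<noteq> 0 \<Longrightarrow> c < \<epsilon> \<Longrightarrow>
      (\<And>g. g \<in> Q \<Longrightarrow> norm (\<pi> g x - x) \<le> c * norm x) \<Longrightarrow> \<exists>v. v \<noteq> 0 \<and> (\<forall>g. \<pi> g v = v)"
    using kazhdan_set_onE[OF kazhdan] by blast
  define t where "t = \<epsilon> / (2 * (m + 1))"
  have "t > 0"
    using \<open>\<epsilon> > 0\<close> \<open>m \<ge> 0\<close> by (simp add: t_def)
  have "2 * t * m = \<epsilon> * (m / (m + 1))"
    using \<open>m \<ge> 0\<close> by (simp add: t_def field_simps)
  also have "\<dots> < \<epsilon>"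
    using \<open>\<epsilon> > 0\<close> \<open>m \<ge> 0\<close> by (simp add: divide_less_eq algebra_simps)
  finally have t_small: "2 * t * m < \<epsilon>" .
  define \<pi> where "\<pi> = (\<lambda>g. cis_scale J (t * f g))"
  have rep: "unitary_rep J \<pi>"
    unfolding \<pi>_def using linear_compose[OF f(1) linear_times[of t]]
    by (intro unitary_rep_cis_scale_linear J) (simp add: o_def)
  obtain x :: 'h where "x \<noteq> 0"
    using nontrivial by blast
  have "norm (\<pi> g x - x) \<le> (2 * t * m) * norm x" if "g \<in> Q" for g
  proof -
    have "norm (\<pi> g x - x) \<le> 2 * \<bar>t * f g\<bar> * norm x"
      unfolding \<pi>_def by (rule norm_cis_scale_minus_le[OF J])
    also have "\<dots> \<le> 2 * (t * m) * norm x"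
      using bound[OF that] \<open>t > 0\<close> by (intro mult_right_mono mult_left_mono) (auto simp: abs_mult)
    finally show ?thesis
      by (simp add: mult.assoc)
  qed
  then obtain v where "v \<noteq> 0" and "\<And>g. \<pi> g v = v"
    using almost_invariant_imp_invariant[OF rep \<open>x \<noteq> 0\<close> t_small] by blast
  moreover have "t \<noteq> 0"
    using \<open>t > 0\<close> by simp
  ultimately show False
    using cis_scale_invariant_eq_0[OF f] unfolding \<pi>_def by blast
qed

theorem lemmaG:
  fixes Q1 :: "((real^'n) \<times> (real^'n)) set"
    and J :: "'h::{real_inner,complete_space} \<Rightarrow> 'h"
  assumes "complex_structure J"
    and "\<exists>x::'h. x \<noteq> 0"
    and "kazhdan_set_on J Q1"
  shows "\<forall>M::real. \<exists>z\<in>Q1. norm (snd z) > M"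
proof
  fix M :: real
  obtain i :: 'n where True
    by simp
  have "linear (\<lambda>z::(real^'n) \<times> (real^'n). snd z $ i)"
    using linear_compose[OF linear_snd bounded_linear.linear[OF bounded_linear_vec_nth]]
    by (simp add: o_def)
  moreover have "snd ((0, \<chi> j. 1) :: (real^'n) \<times> (real^'n)) $ i \<noteq> 0"
    by simp
  ultimately obtain z where "z \<in> Q1" and "\<bar>snd z $ i\<bar> > M"
    using kazhdan_set_linear_unbounded[OF assms] by blast
  then show "\<exists>z\<in>Q1. norm (snd z) > M"
    using component_le_norm_cart[of "snd z" i] by force
qed

end
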